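(* Let $C$ be a non-empty clique of $G$. Then the problem $\max\{f(\mathbf{x}):\mathbf{x}\in\Delta(C)\}$ has a unique local maximizer, which is therefore its unique global maximizer, and this maximizer is $\mathbf{x}(C)$.
   Context: Let $G=(\mathcal{V},\mathcal{E})$ be a simple undirected graph on vertex set $\mathcal{V}=\{1,\dots,n\}$ with adjacency matrix $\mathbf{A}=(a_{ij})$ ($a_{ij}=1$ if $(i,j)\in\mathcal{E}$, else $0$; $a_{ii}=0$). A clique is a subset $C\subseteq\mathcal{V}$ with $(i,j)\in\mathcal{E}$ for all distinct $i,j\in C$. Let $\Delta=\{\mathbf{x}\in\mathbb{R}^n:\mathbf{0}\le\mathbf{x}\le\mathbf{1},\ \mathbf{1}^{\mathsf T}\mathbf{x}=1\}$, $\mathrm{supp}(\mathbf{x})=\{i:x_i\neq0\}$, and for a clique $C$, $\Delta(C)=\{\mathbf{x}\in\Delta:\mathrm{supp}(\mathbf{x})\subseteq C\}$. For a non-empty $C$, the characteristic vector $\mathbf{x}(C)\in\Delta$ has $x(C)_i=1/|C|$ for $i\in C$ and $0$ otherwise. For $\mathbf{x}\in\Delta$, $\mathcal{P}(\mathbf{x})$ is the set of vectors in $\Delta$ obtained by permuting the coordinates of $\mathbf{x}$. Let $\Phi:X\to\mathbb{R}$ be twice continuously differentiable on an open set $X\supset\Delta$, satisfying for every $\mathbf{x}\in\Delta$: (C1) $\nabla^2\Phi(\mathbf{x})$ is positive semidefinite; (C2) $\|\nabla^2\Phi(\mathbf{x})\|_2<2$; (C3) $\Phi$ is constant on $\mathcal{P}(\mathbf{x})$.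 Define $f(\mathbf{x})=\mathbf{x}^{\mathsf T}\mathbf{A}\mathbf{x}+\Phi(\mathbf{x})$. A point $\mathbf{x}$ of a set $Y$ is a local maximizer of $\max\{f:Y\}$ if $f(\mathbf{x})\ge f(\tilde{\mathbf{x}})$ for all $\tilde{\mathbf{x}}\in Y$ in some neighborhood of $\mathbf{x}$. *)

theory Defs
  imports "HOL-Analysis.Analysis"
begin

text \<open>Vertices are the elements of a finite type 'n (playing the role of {1..n});
  vectors are real^'n, the adjacency matrix is real^'n^'n.\<close>

definition simple_adjacency :: "real^'n^'n \<Rightarrow> bool" where
  "simple_adjacency A \<longleftrightarrow>
     (\<forall>i j. A$i$j = 0 \<or> A$i$j = 1) \<and> (\<forall>i j. A$i$j = A$j$i) \<and> (\<forall>i. A$i$i = 0)"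

definition is_clique :: "real^'n^'n \<Rightarrow> 'n set \<Rightarrow> bool" where
  "is_clique A C \<longleftrightarrow> (\<forall>i\<in>C. \<forall>j\<in>C. i \<noteq> j \<longrightarrow> A$i$j = 1)"

definition Delta_set :: "(real^'n) set" where
  "Delta_set = {x. (\<forall>i. 0 \<le> x$i \<and> x$i \<le> 1) \<and> (\<Sum>i\<in>UNIV. x$i) = 1}"

definition supp :: "real^'n \<Rightarrow> 'n set" where
  "supp x = {i. x$i \<noteq> 0}"

definition face :: "'n set \<Rightarrow> (real^'n) set" where
  "face C = {x \<in> Delta_set. supp x \<subseteq> C}"

definition charvec :: "'n set \<Rightarrow> real^'n" where
  "charvec C = (\<chi> i. if i \<in> C then 1 / real (card C) else 0)"

definition permutations_of :: "real^'n \<Rightarrow> (real^'n) set" where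
  "permutations_of x = {y \<in> Delta_set. \<exists>p. p permutes (UNIV::'n set) \<and> y = (\<chi> i. x$(p i))}"

definition local_maximizer :: "(real^'n \<Rightarrow> real) \<Rightarrow> (real^'n) set \<Rightarrow> real^'n \<Rightarrow> bool" where
  "local_maximizer f Y x \<longleftrightarrow> x \<in> Y \<and> (\<exists>e>0. \<forall>y\<in>Y. dist y x < e \<longrightarrow> f y \<le> f x)"

definition global_maximizer :: "(real^'n \<Rightarrow> real) \<Rightarrow> (real^'n) set \<Rightarrow> real^'n \<Rightarrow> bool" where
  "global_maximizer f Y x \<longleftrightarrow> x \<in> Y \<and> (\<forall>y\<in>Y. f y \<le> f x)"

end

theory Submission
  imports Defs
begin

text \<open>On the face of a clique the quadratic part of the objective equals 1 - x\<bullet>x, so the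
  objective is 1 + \<Phi> x - x\<bullet>x there. Its Hessian H - 2I is negative definite because
  the operator norm of H is below 2; hence the objective is strictly concave on the face, and a
  continuous strictly concave function on a compact convex set has exactly one local maximizer,
  which is also its unique global maximizer. Permuting coordinates inside the clique keeps the
  face and the objective invariant, so this unique maximizer is constant on the clique, i.e. it
  is the characteristic vector.\<close>

definition strictly_concave_on :: "'a::real_vector set \<Rightarrow> ('a \<Rightarrow> real) \<Rightarrow> bool" where
  "strictly_concave_on S f \<longleftrightarrow>
     (\<forall>x\<in>S. \<forall>y\<in>S. \<forall>t. x \<noteq> y \<longrightarrow> 0 < t \<longrightarrow> t < 1 \<longrightarrow>
        (1 - t) * f x + t * f y < f ((1 - t) *\<^sub>R x + t *\<^sub>R y))"

lemma strictly_concave_onD: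
  "strictly_concave_on S f \<Longrightarrow> x \<in> S \<Longrightarrow> y \<in> S \<Longrightarrow> x \<noteq> y \<Longrightarrow> 0 < t \<Longrightarrow> t < 1 \<Longrightarrow>
     (1 - t) * f x + t * f y < f ((1 - t) *\<^sub>R x + t *\<^sub>R y)"
  by (auto simp: strictly_concave_on_def)

lemma strictly_concave_on_shift:
  assumes "convex S" "strictly_concave_on S g" "\<And>x. x \<in> S \<Longrightarrow> f x = g x + c"
  shows "strictly_concave_on S f"
  unfolding strictly_concave_on_def
proof (intro ballI allI impI)
  fix x y and t :: real assume xy: "x \<in> S" "y \<in> S" "x \<noteq> y" and t: "0 < t" "t < 1"
  have "(1 - t) *\<^sub>R x + t *\<^sub>R y \<in> S"
    using convexD[OF assms(1) xy(1,2), of "1 - t" t] t by simp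
  with strictly_concave_onD[OF assms(2) xy t] xy assms(3) show
    "(1 - t) * f x + t * f y < f ((1 - t) *\<^sub>R x + t *\<^sub>R y)"
    by (simp add: algebra_simps)
qed

lemma strict_concavity_of_decreasing_derivative:
  fixes G G' :: "real \<Rightarrow> real"
  assumes deriv: "\<And>s. 0 \<le> s \<Longrightarrow> s \<le> 1 \<Longrightarrow> (G has_real_derivative G' s) (at s)"
    and decreasing: "\<And>a b. 0 \<le> a \<Longrightarrow> a < b \<Longrightarrow> b \<le> 1 \<Longrightarrow> G' b < G' a"
    and t: "0 < t" "t < 1"
  shows "(1 - t) * G 0 + t * G 1 < G t"
proof -
  obtain a where a: "0 < a" "a < t" "G t - G 0 = t * G' a"
    using MVT2[of 0 t G G'] deriv t by auto
  obtain b where b: "t < b" "b < 1" "G 1 - G t = (1 - t) * G' b"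
    using MVT2[of t 1 G G'] deriv t by auto
  have "t * (1 - t) * G' b < t * (1 - t) * G' a"
    using decreasing[of a b] a b t by simp
  moreover have "G t - ((1 - t) * G 0 + t * G 1) = (1 - t) * (G t - G 0) - t * (G 1 - G t)"
    by (simp add: algebra_simps)
  ultimately show ?thesis
    unfolding a(3) b(3) by (simp add: algebra_simps)
qed

lemma inner_matrix_vector_less_of_onorm_less:
  fixes H :: "real^'n^'n"
  assumes "onorm (\<lambda>v. H *v v) < c" "d \<noteq> 0"
  shows "(H *v d) \<bullet> d < c * (d \<bullet> d)"
proof -
  have "(H *v d) \<bullet> d \<le> norm (H *v d) * norm d" by (rule norm_cauchy_schwarz)
  also have "\<dots> \<le> onorm (\<lambda>v. H *v v) * norm d * norm d"
    using onorm[OF matrix_vector_mul_bounded_linear[of H], of d] by (simp add: mult_right_mono)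
  also have "\<dots> < c * norm d * norm d"
    using assms by (intro mult_strict_right_mono) auto
  also have "\<dots> = c * (d \<bullet> d)" by (simp add: power2_norm_eq_inner[symmetric] power2_eq_square)
  finally show ?thesis .
qed

text \<open>Along a segment x + s d the function has second derivative (H d)\<bullet>d - 2 d\<bullet>d < 0.\<close>

lemma strictly_concave_on_minus_inner_self:
  fixes \<Phi> :: "real^'n \<Rightarrow> real" and g :: "real^'n \<Rightarrow> real^'n" and H :: "real^'n \<Rightarrow> real^'n^'n"
  assumes S: "convex S" "S \<subseteq> X"
    and D1: "\<And>x. x \<in> X \<Longrightarrow> (\<Phi> has_derivative (\<lambda>h. g x \<bullet> h)) (at x)"
    and D2: "\<And>x. x \<in> X \<Longrightarrow> (g has_derivative (\<lambda>h. H x *v h)) (at x)"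
    and norm_H: "\<And>x. x \<in> S \<Longrightarrow> onorm (\<lambda>v. H x *v v) < 2"
  shows "strictly_concave_on S (\<lambda>v. \<Phi> v - v \<bullet> v)"
  unfolding strictly_concave_on_def
proof (intro ballI allI impI)
  fix x y and t :: real assume xy: "x \<in> S" "y \<in> S" "x \<noteq> y" and t: "0 < t" "t < 1"
  define d where "d = y - x"
  define \<gamma> where "\<gamma> s = x + s *\<^sub>R d" for s :: real
  define G where "G s = \<Phi> (\<gamma> s) - \<gamma> s \<bullet> \<gamma> s" for s
  define G' where "G' s = g (\<gamma> s) \<bullet> d - 2 * (\<gamma> s \<bullet> d)" for s
  have \<gamma>_eq: "\<gamma> s = (1 - s) *\<^sub>R x + s *\<^sub>R y" for s
    by (simp add: \<gamma>_def d_def algebra_simps)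
  have \<gamma>_S: "\<gamma> s \<in> S" if "0 \<le> s" "s \<le> 1" for s
    unfolding \<gamma>_eq using convexD[OF S(1) xy(1,2), of "1 - s" s] that by simp
  have \<gamma>_X: "\<gamma> s \<in> X" if "0 \<le> s" "s \<le> 1" for s
    using \<gamma>_S[OF that] S(2) by blast
  have d\<gamma>: "(\<gamma> has_derivative (\<lambda>h. h *\<^sub>R d)) (at s)" for s
    unfolding \<gamma>_def by (auto intro!: derivative_eq_intros)
  have dG: "(G has_real_derivative G' s) (at s)" if "0 \<le> s" "s \<le> 1" for s
  proof -
    have "(G has_derivative (\<lambda>h. g (\<gamma> s) \<bullet> (h *\<^sub>R d) - (\<gamma> s \<bullet> h *\<^sub>R d + h *\<^sub>R d \<bullet> \<gamma> s))) (at s)"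
      unfolding G_def[abs_def]
      by (intro has_derivative_diff has_derivative_inner d\<gamma>
          has_derivative_compose[OF d\<gamma> D1[OF \<gamma>_X[OF that]]])
    moreover have "(\<lambda>h. g (\<gamma> s) \<bullet> (h *\<^sub>R d) - (\<gamma> s \<bullet> h *\<^sub>R d + h *\<^sub>R d \<bullet> \<gamma> s)) = (*) (G' s)"
      by (auto simp: G'_def inner_commute algebra_simps)
    ultimately show ?thesis by (simp add: has_field_derivative_def)
  qed
  have dG': "(G' has_real_derivative (H (\<gamma> s) *v d) \<bullet> d - 2 * (d \<bullet> d)) (at s)"
    if "0 \<le> s" "s \<le> 1" for s
  proof -
    have "(G' has_derivative (\<lambda>h. (H (\<gamma> s) *v (h *\<^sub>R d)) \<bullet> d - 2 * (h *\<^sub>R d \<bullet> d))) (at s)"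
      unfolding G'_def[abs_def]
      by (intro has_derivative_diff has_derivative_mult_right has_derivative_inner_left d\<gamma>
          has_derivative_compose[OF d\<gamma> D2[OF \<gamma>_X[OF that]]])
    moreover have "(\<lambda>h. (H (\<gamma> s) *v (h *\<^sub>R d)) \<bullet> d - 2 * (h *\<^sub>R d \<bullet> d))
        = (*) ((H (\<gamma> s) *v d) \<bullet> d - 2 * (d \<bullet> d))"
      by (auto simp: matrix_vector_mult_scaleR algebra_simps)
    ultimately show ?thesis by (simp add: has_field_derivative_def)
  qed
  have d_nonzero: "d \<noteq> 0" using xy(3) by (simp add: d_def)
  have concave: "(H (\<gamma> s) *v d) \<bullet> d - 2 * (d \<bullet> d) < 0" if "0 \<le> s" "s \<le> 1" for s
    using inner_matrix_vector_less_of_onorm_less[OF norm_H[OF \<gamma>_S[OF that]] d_nonzero] by linarith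
  have "G' b < G' a" if "0 \<le> a" "a < b" "b \<le> 1" for a b
  proof (rule DERIV_neg_imp_decreasing[OF that(2)])
    fix s assume "a \<le> s" "s \<le> b"
    with that have "0 \<le> s" "s \<le> 1" by linarith+
    with dG' concave show "\<exists>y. (G' has_real_derivative y) (at s) \<and> y < 0" by blast
  qed
  then have "(1 - t) * G 0 + t * G 1 < G t"
    using strict_concavity_of_decreasing_derivative[OF dG _ t] by blast
  then show "(1 - t) * (\<Phi> x - x \<bullet> x) + t * (\<Phi> y - y \<bullet> y)
      < \<Phi> ((1 - t) *\<^sub>R x + t *\<^sub>R y) - ((1 - t) *\<^sub>R x + t *\<^sub>R y) \<bullet> ((1 - t) *\<^sub>R x + t *\<^sub>R y)"
    by (simp add: G_def \<gamma>_eq)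
qed

lemma local_maximizer_strictly_concave_strict:
  fixes f :: "real^'n \<Rightarrow> real"
  assumes S: "convex S" "strictly_concave_on S f"
    and z: "local_maximizer f S z" and y: "y \<in> S" "y \<noteq> z"
  shows "f y < f z"
proof (rule ccontr)
  assume "\<not> f y < f z"
  then have ge: "f z \<le> f y" by simp
  from z obtain e where e: "e > 0" and zS: "z \<in> S"
    and loc: "\<And>w. w \<in> S \<Longrightarrow> dist w z < e \<Longrightarrow> f w \<le> f z"
    unfolding local_maximizer_def by blast
  have nd: "norm (y - z) > 0" using y by simp
  define t where "t = min (1/2) (e / (2 * norm (y - z)))"
  have t: "0 < t" "t < 1" using e nd by (auto simp: t_def)
  define w where "w = (1 - t) *\<^sub>R z + t *\<^sub>R y"
  have "(1 - t) * f z + t * f z \<le> (1 - t) * f z + t * f y"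
    using ge t by simp
  then have "f z < f w"
    using strictly_concave_onD[OF S(2) zS y(1) y(2)[symmetric] t] by (simp add: w_def algebra_simps)
  moreover have "w \<in> S"
    using convexD[OF S(1) zS y(1), of "1 - t" t] t by (simp add: w_def)
  moreover have "dist w z < e"
  proof -
    have "dist w z = t * norm (y - z)"
      using t by (simp add: w_def dist_norm algebra_simps flip: scaleR_diff_right)
    also have "\<dots> \<le> e / (2 * norm (y - z)) * norm (y - z)"
      by (intro mult_right_mono) (auto simp: t_def)
    also have "\<dots> < e" using nd e by (simp add: field_simps)
    finally show ?thesis .
  qed
  ultimately show False using loc by fastforce
qed

lemma strictly_concave_unique_maximizer:
  fixes f :: "real^'n \<Rightarrow> real"
  assumes S: "compact S" "convex S" "S \<noteq> {}"
    and f: "continuous_on S f" "strictly_concave_on S f"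
  obtains z where "{x. local_maximizer f S x} = {z}" "{x. global_maximizer f S x} = {z}"
proof -
  obtain z where z: "z \<in> S" "\<And>y. y \<in> S \<Longrightarrow> f y \<le> f z"
    using continuous_attains_sup[OF S(1,3) f(1)] by blast
  have global: "global_maximizer f S z" using z by (simp add: global_maximizer_def)
  have global_local: "local_maximizer f S x" if "global_maximizer f S x" for x
    using that by (auto simp: global_maximizer_def local_maximizer_def intro: exI[of _ 1])
  have local_eq: "x = z" if "local_maximizer f S x" for x
    using local_maximizer_strictly_concave_strict[OF S(2) f(2) that z(1)] z(2) that
    by (force simp: local_maximizer_def)
  show ?thesis
    by (rule that) (use global global_local local_eq in blast)+
qed

lemma face_subset_Delta: "face C \<subseteq> Delta_set"
  by (auto simp: face_def)

lemma convex_face: "convex (face C)" for C :: "'n::finite set"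
proof (rule convexI)
  fix x y :: "real^'n" and u v :: real
  assume x: "x \<in> face C" and y: "y \<in> face C" and uv: "0 \<le> u" "0 \<le> v" "u + v = 1"
  have bounds: "0 \<le> u * x$i + v * y$i \<and> u * x$i + v * y$i \<le> 1" for i
  proof -
    have "0 \<le> x$i" "x$i \<le> 1" "0 \<le> y$i" "y$i \<le> 1" using x y by (auto simp: face_def Delta_set_def)
    then have "u * x$i \<le> u" "v * y$i \<le> v"
      using uv by (auto intro: mult_left_le)
    with \<open>0 \<le> x$i\<close> \<open>0 \<le> y$i\<close> uv show ?thesis by simp
  qed
  have "(\<Sum>i\<in>UNIV. u * x$i + v * y$i) = u * (\<Sum>i\<in>UNIV. x$i) + v * (\<Sum>i\<in>UNIV. y$i)"
    by (simp add: sum.distrib sum_distrib_left)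
  also have "\<dots> = 1" using x y uv by (simp add: face_def Delta_set_def)
  finally have "(\<Sum>i\<in>UNIV. u * x$i + v * y$i) = 1" .
  moreover have "(u *\<^sub>R x + v *\<^sub>R y)$i = 0" if "i \<notin> C" for i
  proof -
    have "x$i = 0" "y$i = 0" using x y that unfolding face_def supp_def by blast+
    then show ?thesis by simp
  qed
  then have "supp (u *\<^sub>R x + v *\<^sub>R y) \<subseteq> C"
    unfolding supp_def by blast
  ultimately show "u *\<^sub>R x + v *\<^sub>R y \<in> face C"
    using bounds by (simp add: face_def Delta_set_def)
qed

lemma compact_face: "compact (face C)" for C :: "'n::finite set"
proof (subst compact_eq_bounded_closed, intro conjI)
  show "bounded (face C)"
    unfolding bounded_iff
  proof (intro exI ballI)
    fix x :: "real^'n" assume x: "x \<in> face C"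
    have "norm x \<le> (\<Sum>i\<in>UNIV. \<bar>x$i\<bar>)" by (rule norm_le_l1_cart)
    also have "\<dots> = (\<Sum>i\<in>UNIV. x$i)" using x by (auto simp: face_def Delta_set_def intro!: sum.cong)
    also have "\<dots> = 1" using x by (auto simp: face_def Delta_set_def)
    finally show "norm x \<le> 1" .
  qed
  have "face C = {x. \<forall>i. 0 \<le> x$i \<and> x$i \<le> 1 \<and> (i \<notin> C \<longrightarrow> x$i = 0)} \<inter> {x. (\<Sum>i\<in>UNIV. x$i) = 1}"
    by (auto simp: face_def Delta_set_def supp_def)
  also have "closed \<dots>"
    by (intro closed_Int closed_Collect_all closed_Collect_conj closed_Collect_imp
        closed_Collect_le closed_Collect_eq open_Collect_const continuous_intros)
  finally show "closed (face C)" .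
qed

lemma charvec_in_face:
  assumes "C \<noteq> {}"
  shows "charvec C \<in> face C"
proof -
  have "card C > 0" using assms by (simp add: card_gt_0_iff)
  then have card: "real (card C) \<ge> 1" by simp
  have "(\<Sum>i\<in>UNIV. charvec C $ i) = (\<Sum>i\<in>C. 1 / real (card C))"
    unfolding charvec_def by (simp add: sum.If_cases)
  also have "\<dots> = 1" using assms card by simp
  finally show ?thesis using card
    by (auto simp: face_def Delta_set_def supp_def charvec_def)
qed

lemma face_constant_on_clique_eq_charvec:
  assumes x: "x \<in> face C" and const: "\<And>i j. i \<in> C \<Longrightarrow> j \<in> C \<Longrightarrow> x$i = x$j"
    and c: "c \<in> C"
  shows "x = charvec C"
proof -
  have outside: "x$i = 0" if "i \<notin> C" for i using x that by (auto simp: face_def supp_def)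
  have "1 = (\<Sum>i\<in>UNIV. x$i)" using x by (simp add: face_def Delta_set_def)
  also have "\<dots> = (\<Sum>i\<in>UNIV. if i \<in> C then x$c else 0)"
    by (rule sum.cong) (auto simp: outside const[OF c])
  also have "\<dots> = real (card C) * x$c" by (simp add: sum.If_cases)
  finally have "x$c = 1 / real (card C)"
    using c by (auto simp: eq_divide_eq mult.commute)
  then show ?thesis
    unfolding charvec_def vec_eq_iff using outside const[OF c] by auto
qed

lemma clique_quadratic_form_face:
  fixes A :: "real^'n^'n"
  assumes A: "simple_adjacency A" and C: "is_clique A C" and x: "x \<in> face C"
  shows "x \<bullet> (A *v x) = 1 - x \<bullet> x"
proof -
  have outside: "x$i = 0" if "i \<notin> C" for i using x that by (auto simp: face_def supp_def)
  have entry: "x$i * (A$i$j * x$j) = x$i * x$j - (if i = j then x$i * x$j else 0)" for i j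
    using A C outside by (cases "i \<in> C \<and> j \<in> C") (auto simp: simple_adjacency_def is_clique_def)
  have "x \<bullet> (A *v x) = (\<Sum>i\<in>UNIV. \<Sum>j\<in>UNIV. x$i * (A$i$j * x$j))"
    by (simp add: inner_vec_def matrix_vector_mult_def sum_distrib_left)
  also have "\<dots> = (\<Sum>i\<in>UNIV. x$i) * (\<Sum>j\<in>UNIV. x$j) - (\<Sum>i\<in>UNIV. x$i * x$i)"
    by (simp add: entry sum_subtractf sum_product)
  finally show ?thesis using x by (simp add: inner_vec_def face_def Delta_set_def)
qed

lemma permute_coordinates_in_face:
  fixes x :: "real^'n"
  assumes p: "p permutes C" and x: "x \<in> face C"
  shows "(\<chi> k. x$(p k)) \<in> face C \<inter> permutations_of x"
proof -
  have pU: "p permutes (UNIV :: 'n set)" using p by (rule permutes_subset) simp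
  have "(\<Sum>k\<in>UNIV. x$(p k)) = (\<Sum>k\<in>UNIV. x$k)"
    using sum.permute[OF pU, of "\<lambda>k. x$k"] by (simp add: o_def)
  then have Delta: "(\<chi> k. x$(p k)) \<in> Delta_set"
    using x by (auto simp: face_def Delta_set_def)
  have "supp (\<chi> k. x$(p k)) \<subseteq> C"
    using x permutes_not_in[OF p] by (auto simp: face_def supp_def)
  with Delta pU show ?thesis
    by (auto simp: face_def permutations_of_def)
qed

lemma inner_self_permutations_of:
  fixes x :: "real^'n"
  assumes "y \<in> permutations_of x"
  shows "y \<bullet> y = x \<bullet> x"
proof -
  obtain p where p: "p permutes (UNIV :: 'n set)" "y = (\<chi> i. x$(p i))"
    using assms by (auto simp: permutations_of_def)
  then show ?thesis
    using sum.permute[OF p(1), of "\<lambda>k. x$k * x$k"] by (simp add: o_def inner_vec_def)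
qed

text \<open>A transposition of two clique coordinates maps the unique maximizer to a maximizer.\<close>

lemma unique_symmetric_maximizer_eq_charvec:
  assumes z: "{x. global_maximizer f (face C) x} = {z}"
    and invariant: "\<And>x y. x \<in> face C \<Longrightarrow> y \<in> face C \<inter> permutations_of x \<Longrightarrow> f y = f x"
    and C: "C \<noteq> {}"
  shows "z = charvec C"
proof -
  have zmax: "global_maximizer f (face C) z" using z by blast
  then have zC: "z \<in> face C" by (simp add: global_maximizer_def)
  have "z$i = z$j" if ij: "i \<in> C" "j \<in> C" for i j
  proof -
    define y where "y = (\<chi> k. z$(Transposition.transpose i j k))"
    have y: "y \<in> face C \<inter> permutations_of z"
      unfolding y_def using ij by (intro permute_coordinates_in_face[OF _ zC] permutes_swap_id)
    then have "global_maximizer f (face C) y"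
      using zmax invariant[OF zC y] by (simp add: global_maximizer_def)
    then have "y = z" using z by blast
    then show ?thesis
      using vec_lambda_beta[of "\<lambda>k. z$(Transposition.transpose i j k)" j] by (simp add: y_def)
  qed
  then show ?thesis using face_constant_on_clique_eq_charvec[OF zC] C by blast
qed

theorem proposition1:
  fixes A :: "real^'n^'n" and \<Phi> :: "real^'n \<Rightarrow> real"
    and g :: "real^'n \<Rightarrow> real^'n" and H :: "real^'n \<Rightarrow> real^'n^'n"
    and X :: "(real^'n) set" and C :: "'n set"
  assumes A: "simple_adjacency A"
    and X: "open X" "Delta_set \<subseteq> X"
    and D1: "\<And>x. x \<in> X \<Longrightarrow> (\<Phi> has_derivative (\<lambda>h. g x \<bullet> h)) (at x)"
    and D2: "\<And>x. x \<in> X \<Longrightarrow> (g has_derivative (\<lambda>h. H x *v h)) (at x)"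
    and D2c: "continuous_on X H"
    and C1: "\<And>x v. x \<in> Delta_set \<Longrightarrow> 0 \<le> v \<bullet> (H x *v v)"
    and C2: "\<And>x. x \<in> Delta_set \<Longrightarrow> onorm (\<lambda>v. H x *v v) < 2"
    and C3: "\<And>x y. x \<in> Delta_set \<Longrightarrow> y \<in> permutations_of x \<Longrightarrow> \<Phi> y = \<Phi> x"
    and C: "is_clique A C" "C \<noteq> {}"
  shows "{x. local_maximizer (\<lambda>x. x \<bullet> (A *v x) + \<Phi> x) (face C) x} = {charvec C}
       \<and> {x. global_maximizer (\<lambda>x. x \<bullet> (A *v x) + \<Phi> x) (face C) x} = {charvec C}"
proof -
  define f where "f x = x \<bullet> (A *v x) + \<Phi> x" for x
  have f_face: "f x = (\<Phi> x - x \<bullet> x) + 1" if "x \<in> face C" for x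
    using clique_quadratic_form_face[OF A C(1) that] by (simp add: f_def)
  have face_X: "face C \<subseteq> X" using face_subset_Delta X(2) by blast
  have "strictly_concave_on (face C) (\<lambda>v. \<Phi> v - v \<bullet> v)"
    using strictly_concave_on_minus_inner_self[OF convex_face face_X D1 D2] C2 face_subset_Delta
    by blast
  then have concave: "strictly_concave_on (face C) f"
    by (rule strictly_concave_on_shift[OF convex_face _ f_face])
  have "continuous_on (face C) \<Phi>"
    using face_X D1 has_derivative_continuous by (blast intro: continuous_at_imp_continuous_on)
  then have continuous: "continuous_on (face C) f"
    unfolding f_def[abs_def] by (intro continuous_intros)
  obtain z where z: "{x. local_maximizer f (face C) x} = {z}" "{x. global_maximizer f (face C) x} = {z}"
    using strictly_concave_unique_maximizer[OF compact_face convex_face _ continuous concave]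
      charvec_in_face[OF C(2)] by blast
  have "z = charvec C"
  proof (rule unique_symmetric_maximizer_eq_charvec[OF z(2) _ C(2)])
    fix x y assume x: "x \<in> face C" and y: "y \<in> face C \<inter> permutations_of x"
    have "\<Phi> y = \<Phi> x" using C3 x y face_subset_Delta by blast
    moreover have "y \<bullet> y = x \<bullet> x" using y inner_self_permutations_of by blast
    ultimately show "f y = f x" using f_face x y by simp
  qed
  moreover have "(\<lambda>x. x \<bullet> (A *v x) + \<Phi> x) = f" by (simp add: f_def fun_eq_iff)
  ultimately show ?thesis using z by simp
qed

end
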